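(* Let $\{\varphi_n\}_{n\ge1}$ be an orthonormal system on $[0,1]$ and let $\{d_n\}$ be a sequence of real numbers with $d_n=O\!\left(\frac{\sqrt{n}}{\log^2(n+1)}\right)$. For $a=\{a_n\}\in\ell_2$ put $Q_n(d,a,x)=\sum_{k=1}^{n} d_k a_k \log k\,\varphi_k(x)$ and $B_n(d,a)=\max_{1\le i<n}\left|\int_0^{i/n}Q_n(d,a,x)\,dx\right|$. Suppose that for every $a\in\ell_2$, $B_n(d,a)=O(1)$ as $n\to\infty$. Then for every $f\in BV$, $$\sum_{k=1}^{\infty} d_k^2\, C_k^2(f)\,\log^2 k<+\infty,$$ where $C_k(f)=\int_0^1 f(x)\varphi_k(x)\,dx$.
   Context: $BV$ denotes the class of (finite-valued) functions of bounded variation on $[0,1]$. An orthonormal system on $[0,1]$ is a sequence of functions orthonormal in $L_2(0,1)$. $\log$ denotes the logarithm (so $\log 1=0$). *)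

theory Defs
  imports "HOL-Analysis.Analysis" "HOL-Library.Landau_Symbols"
begin

definition BV01 :: "(real \<Rightarrow> real) \<Rightarrow> bool" where
  "BV01 f \<longleftrightarrow> (\<exists>M. \<forall>xs. sorted xs \<and> set xs \<subseteq> {0..1} \<longrightarrow>
      (\<Sum>i<length xs - 1. \<bar>f (xs ! (i+1)) - f (xs ! i)\<bar>) \<le> M)"

definition orthonormal_system :: "(nat \<Rightarrow> real \<Rightarrow> real) \<Rightarrow> bool" where
  "orthonormal_system \<phi> \<longleftrightarrow>
     (\<forall>n\<ge>1. set_borel_measurable lborel {0..1} (\<phi> n) \<and>
             set_integrable lborel {0..1} (\<lambda>x. (\<phi> n x)^2)) \<and>
     (\<forall>m\<ge>1. \<forall>n\<ge>1. (LINT x:{0..1}|lborel. \<phi> m x * \<phi> n x) = (if m = n then 1 else 0))"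

definition Qn :: "(nat \<Rightarrow> real \<Rightarrow> real) \<Rightarrow> (nat \<Rightarrow> real) \<Rightarrow> (nat \<Rightarrow> real) \<Rightarrow> nat \<Rightarrow> real \<Rightarrow> real" where
  "Qn \<phi> d a n x = (\<Sum>k=1..n. d k * a k * ln (real k) * \<phi> k x)"

definition Bn :: "(nat \<Rightarrow> real \<Rightarrow> real) \<Rightarrow> (nat \<Rightarrow> real) \<Rightarrow> (nat \<Rightarrow> real) \<Rightarrow> nat \<Rightarrow> real" where
  "Bn \<phi> d a n = Max ((\<lambda>i. \<bar>LINT x:{0..real i / real n}|lborel. Qn \<phi> d a n x\<bar>) ` {1..<n})"

definition Fourier_coeff :: "(nat \<Rightarrow> real \<Rightarrow> real) \<Rightarrow> (real \<Rightarrow> real) \<Rightarrow> nat \<Rightarrow> real" where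
  "Fourier_coeff \<phi> f k = (LINT x:{0..1}|lborel. f x * \<phi> k x)"

end

(*
  Let Q be the sum of c k * phi k over 1 <= k <= n, so that the sum of c k * C_k(f) is the
  integral of f * Q over [0,1]. Replacing f on each cell ((i-1)/n, i/n] by its value at the
  right end point costs at most Var(f) times the largest integral of |Q| over a cell. By
  AM-GM and orthonormality (the integral of Q^2 is the sum of the c k^2) this is at most
  (1 + (sum of c k^2) / n) / 2. Abel summation bounds the remaining Riemann-type sum by
  (|f 0| + 2 Var(f)) times the largest |integral of Q over [0, i/n]|, which is B_n(d,a)
  for c k = d k * a k * log k.

  For that choice of c the growth condition on d gives (sum of c k^2) <= L n (sum of a k^2),
  so the hypothesis B_n(d,a) = O(1) bounds the partial sums of the pairing of a with
  d k * C_k(f) * log k for every a in l2. By Landau's converse of the Cauchy-Schwarz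
  inequality, d k * C_k(f) * log k is then square summable.
*)

theory Submission
  imports Defs
begin

section \<open>Lebesgue integrals over intervals\<close>

lemma set_borel_measurable_mult:
  fixes f g :: "'a \<Rightarrow> real"
  assumes "set_borel_measurable M S f" "set_borel_measurable M S g"
  shows "set_borel_measurable M S (\<lambda>x. f x * g x)"
proof -
  have "(\<lambda>x. (indicator S x * f x) * (indicator S x * g x)) \<in> borel_measurable M"
    using assms unfolding set_borel_measurable_def by simp
  then show ?thesis
    unfolding set_borel_measurable_def
    by (rule measurable_cong[THEN iffD1, rotated]) (auto simp: indicator_def)
qed

lemma set_integrable_sum:
  fixes g :: "'i \<Rightarrow> 'a \<Rightarrow> real"
  assumes "\<And>k. k \<in> K \<Longrightarrow> set_integrable M A (g k)"
  shows "set_integrable M A (\<lambda>x. \<Sum>k\<in>K. g k x)"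
  using assms unfolding set_integrable_def by (simp add: sum_distrib_left)

lemma set_integral_sum:
  fixes g :: "'i \<Rightarrow> 'a \<Rightarrow> real"
  assumes "\<And>k. k \<in> K \<Longrightarrow> set_integrable M A (g k)"
  shows "(LINT x:A|M. \<Sum>k\<in>K. g k x) = (\<Sum>k\<in>K. LINT x:A|M. g k x)"
  using assms unfolding set_integrable_def set_lebesgue_integral_def
  by (simp add: sum_distrib_left integral_sum)

lemma set_integral_singleton: "(LINT x:{a}|lborel. g x) = (0::real)"
proof -
  have "(LINT x:{a}|lborel. g x) = (LINT x:{a}|lborel. g a)"
    by (rule set_lebesgue_integral_cong) auto
  then show ?thesis by (simp add: set_integral_const)
qed

lemma set_integral_abs_nonneg: "0 \<le> (LINT x:S|M. \<bar>g x\<bar> :: real)"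
  unfolding set_lebesgue_integral_def by (intro integral_nonneg_AE) simp

lemma set_integral_mono_set:
  fixes g :: "'a \<Rightarrow> real"
  assumes "set_integrable M T g" "S \<in> sets M" "S \<subseteq> T" "\<And>x. x \<in> T \<Longrightarrow> 0 \<le> g x"
  shows "(LINT x:S|M. g x) \<le> (LINT x:T|M. g x)"
proof -
  have "set_integrable M S g"
    using assms(1-3) by (rule set_integrable_subset)
  then show ?thesis
    using assms unfolding set_lebesgue_integral_def set_integrable_def
    by (intro integral_mono) (auto simp: indicator_def)
qed

lemma set_integral_consecutive_intervals:
  fixes g :: "real \<Rightarrow> real" and p :: "nat \<Rightarrow> real"
  assumes "incseq p" "set_integrable lborel {p 0..p m} g"
  shows "(LINT x:{p 0..p m}|lborel. g x) = (\<Sum>i<m. LINT x:{p i<..p (Suc i)}|lborel. g x)"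
  using assms(2)
proof (induction m)
  case 0
  then show ?case by (simp add: set_integral_singleton)
next
  case (Suc m)
  have le: "p 0 \<le> p m" "p m \<le> p (Suc m)"
    using \<open>incseq p\<close> by (simp_all add: incseqD)
  then have split: "{p 0..p (Suc m)} = {p 0..p m} \<union> {p m<..p (Suc m)}"
    by auto
  have "set_integrable lborel {p 0..p m} g" "set_integrable lborel {p m<..p (Suc m)} g"
    using Suc.prems le by (auto intro: set_integrable_subset)
  then show ?case
    using Suc.IH unfolding split by (subst set_integral_Un) auto
qed

lemma set_integral_abs_le_AM_GM:
  fixes g :: "'a \<Rightarrow> real"
  assumes "S \<in> sets M" "emeasure M S \<noteq> \<infinity>" "t > 0"
    and "set_integrable M S g" "set_integrable M S (\<lambda>x. (g x)^2)"
  shows "(LINT x:S|M. \<bar>g x\<bar>) \<le> t/2 * (LINT x:S|M. (g x)^2) + measure M S / (2*t)"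
proof -
  have AM_GM: "\<bar>y\<bar> \<le> t/2 * y^2 + 1/(2*t)" for y
  proof -
    have "2 * (t * \<bar>y\<bar>) * 1 \<le> (t * \<bar>y\<bar>)^2 + 1^2"
      by (rule sum_squares_bound)
    with \<open>t > 0\<close> show ?thesis
      by (simp add: field_simps power_mult_distrib power2_abs power2_eq_square)
  qed
  have const: "set_integrable M S (\<lambda>_. 1/(2*t))"
    using assms(1,2) unfolding set_integrable_def
    by (simp add: less_top[symmetric])
  have "(LINT x:S|M. \<bar>g x\<bar>) \<le> (LINT x:S|M. t/2 * (g x)^2 + 1/(2*t))"
    using assms(4,5) const by (intro set_integral_mono set_integrable_abs set_integral_add AM_GM) auto
  also have "\<dots> = t/2 * (LINT x:S|M. (g x)^2) + measure M S / (2*t)"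
    using assms const by (simp add: set_integral_add set_integral_const)
  finally show ?thesis .
qed

definition grid_cell :: "nat \<Rightarrow> nat \<Rightarrow> real set" where
  "grid_cell n i = {real i / real n<..real (Suc i) / real n}"

lemma grid_cell_bounds:
  assumes "i < n"
  shows "0 \<le> real i / real n" "real i / real n \<le> real (Suc i) / real n" "real (Suc i) / real n \<le> 1"
  using assms by (simp_all add: divide_right_mono)

lemma grid_cell_subset:
  assumes "i < n"
  shows "grid_cell n i \<subseteq> {0..1}"
proof
  fix x assume "x \<in> grid_cell n i"
  then have "real i / real n < x" "x \<le> real (Suc i) / real n"
    unfolding grid_cell_def by simp_all
  with grid_cell_bounds[OF assms] show "x \<in> {0..1}"
    unfolding atLeastAtMost_iff by linarith
qed

lemma set_integrable_grid_cell:
  fixes g :: "real \<Rightarrow> real"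
  assumes "set_integrable lborel {0..1} g" "i < n"
  shows "set_integrable lborel (grid_cell n i) g"
  using set_integrable_subset[OF assms(1) _ grid_cell_subset[OF assms(2)]] by (simp add: grid_cell_def)

lemma set_integral_grid:
  fixes g :: "real \<Rightarrow> real"
  assumes "set_integrable lborel {0..1} g" "m \<le> n"
  shows "(LINT x:{0..real m / real n}|lborel. g x) = (\<Sum>i<m. LINT x:grid_cell n i|lborel. g x)"
proof -
  have "incseq (\<lambda>i. real i / real n)"
    by (auto simp: incseq_def divide_right_mono)
  moreover have "set_integrable lborel {0..real m / real n} g"
    using set_integrable_subset[OF assms(1)] assms(2) by (cases "n = 0") auto
  ultimately show ?thesis
    using set_integral_consecutive_intervals[of "\<lambda>i. real i / real n" m g] by (simp add: grid_cell_def)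
qed

lemma measure_grid_cell: "i < n \<Longrightarrow> measure lborel (grid_cell n i) = 1 / real n"
  using grid_cell_bounds[of i n] by (simp add: grid_cell_def measure_def flip: diff_divide_distrib)

section \<open>Functions of bounded variation\<close>

definition variation :: "(real \<Rightarrow> real) \<Rightarrow> real list \<Rightarrow> real" where
  "variation f xs = (\<Sum>i<length xs - 1. \<bar>f (xs ! (i+1)) - f (xs ! i)\<bar>)"

definition variation_upto :: "(real \<Rightarrow> real) \<Rightarrow> real \<Rightarrow> real" where
  "variation_upto f x = Sup (variation f ` {xs. sorted xs \<and> set xs \<subseteq> {0..x}})"

lemma variation_snoc:
  assumes "xs \<noteq> []"
  shows "variation f (xs @ [z]) = variation f xs + \<bar>f z - f (last xs)\<bar>"
proof -
  obtain m where m: "length xs = Suc m" using assms by (cases xs) auto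
  have "variation f (xs @ [z]) = (\<Sum>i<m. \<bar>f ((xs@[z]) ! (i+1)) - f ((xs@[z]) ! i)\<bar>) + \<bar>f z - f (xs ! m)\<bar>"
    unfolding variation_def using m by (simp add: nth_append)
  also have "(\<Sum>i<m. \<bar>f ((xs@[z]) ! (i+1)) - f ((xs@[z]) ! i)\<bar>) = variation f xs"
    unfolding variation_def using m by (intro sum.cong) (auto simp: nth_append)
  also have "xs ! m = last xs" using m assms by (simp add: last_conv_nth)
  finally show ?thesis .
qed

lemma variation_le_snoc: "variation f xs \<le> variation f (xs @ [z])"
proof (cases "xs = []")
  case False
  then show ?thesis by (simp add: variation_snoc)
qed (simp add: variation_def)

lemma BV01_bdd_above_variation:
  assumes "BV01 f" "x \<le> 1"
  shows "bdd_above (variation f ` {xs. sorted xs \<and> set xs \<subseteq> {0..x}})"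
proof -
  obtain M where "\<And>xs. sorted xs \<Longrightarrow> set xs \<subseteq> {0..1} \<Longrightarrow> variation f xs \<le> M"
    using assms(1) unfolding BV01_def variation_def by blast
  then show ?thesis using assms(2) by (intro bdd_aboveI[of _ M]) fastforce
qed

lemma variation_upto_nonneg:
  assumes "BV01 f" "x \<le> 1"
  shows "0 \<le> variation_upto f x"
proof -
  have "variation f [] \<le> variation_upto f x"
    unfolding variation_upto_def by (rule cSup_upper[OF _ BV01_bdd_above_variation[OF assms]]) auto
  then show ?thesis by (simp add: variation_def)
qed

lemma variation_upto_increment:
  assumes "BV01 f" "0 \<le> x" "x \<le> y" "y \<le> 1"
  shows "variation_upto f x + \<bar>f y - f x\<bar> \<le> variation_upto f y"
proof -
  have "variation_upto f x \<le> variation_upto f y - \<bar>f y - f x\<bar>" unfolding variation_upto_def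
  proof (rule cSup_least)
    fix v assume "v \<in> variation f ` {xs. sorted xs \<and> set xs \<subseteq> {0..x}}"
    then obtain xs where xs: "sorted xs" "set xs \<subseteq> {0..x}" and v: "v = variation f xs" by blast
    have "v + \<bar>f y - f x\<bar> \<le> variation f ((xs @ [x]) @ [y])"
      using v variation_le_snoc[of f xs x] variation_snoc[of "xs @ [x]" f y] by simp
    also have "\<dots> \<le> Sup (variation f ` {xs. sorted xs \<and> set xs \<subseteq> {0..y}})"
      using xs assms by (intro cSup_upper BV01_bdd_above_variation imageI) (auto simp: sorted_append)
    finally show "v \<le> Sup (variation f ` {xs. sorted xs \<and> set xs \<subseteq> {0..y}}) - \<bar>f y - f x\<bar>"
      by simp
  qed (auto intro: exI[of _ "[]"])
  then show ?thesis by simp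
qed

lemma variation_upto_mono:
  "BV01 f \<Longrightarrow> 0 \<le> x \<Longrightarrow> x \<le> y \<Longrightarrow> y \<le> 1 \<Longrightarrow> variation_upto f x \<le> variation_upto f y"
  using variation_upto_increment[of f x y] by simp

lemma BV01_abs_le:
  assumes "BV01 f" "x \<in> {0..1}"
  shows "\<bar>f x\<bar> \<le> \<bar>f 0\<bar> + variation_upto f 1"
  using assms variation_upto_increment[of f 0 x] variation_upto_nonneg[of f 0]
    variation_upto_mono[of f x 1] by auto

lemma BV01_measurable:
  assumes "BV01 f"
  shows "set_borel_measurable lborel {0..1} f"
proof -
  have "mono_on {0..1} (variation_upto f)"
    using assms by (intro mono_onI variation_upto_mono) auto
  moreover have "mono_on {0..1} (\<lambda>x. variation_upto f x - f x)"
  proof (rule mono_onI)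
    fix x y :: real assume "x \<in> {0..1}" "y \<in> {0..1}" "x \<le> y"
    then have "variation_upto f x + \<bar>f y - f x\<bar> \<le> variation_upto f y"
      using assms variation_upto_increment by auto
    then show "variation_upto f x - f x \<le> variation_upto f y - f y" by linarith
  qed
  ultimately have "(\<lambda>x. variation_upto f x - (variation_upto f x - f x))
      \<in> borel_measurable (restrict_space borel {0..1})"
    using borel_measurable_mono_on_fnc by measurable
  then have "f \<in> borel_measurable (restrict_space lborel {0..1})" by simp
  then show ?thesis
    unfolding set_borel_measurable_def by (subst (asm) borel_measurable_restrict_space_iff) auto
qed

lemma BV01_set_integrable_mult:
  assumes "BV01 f" "S \<in> sets lborel" "S \<subseteq> {0..1}" "set_integrable lborel S g"
  shows "set_integrable lborel S (\<lambda>x. f x * g x)"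
proof (rule set_integrable_bound)
  show "set_integrable lborel S (\<lambda>x. (\<bar>f 0\<bar> + variation_upto f 1) * \<bar>g x\<bar>)"
    using assms(4) by (intro set_integrable_mult_right set_integrable_abs)
  have "set_borel_measurable lborel S f"
    using BV01_measurable[OF assms(1)] assms(2,3) by (rule set_borel_measurable_subset)
  moreover have "set_borel_measurable lborel S g"
    using assms(4) unfolding set_integrable_def set_borel_measurable_def
    by (rule borel_measurable_integrable)
  ultimately show "set_borel_measurable lborel S (\<lambda>x. f x * g x)"
    by (rule set_borel_measurable_mult)
  show "AE x in lborel. x \<in> S \<longrightarrow>
      norm (f x * g x) \<le> norm ((\<bar>f 0\<bar> + variation_upto f 1) * \<bar>g x\<bar>)"
  proof (intro AE_I2 impI)
    fix x assume "x \<in> S"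
    then have "\<bar>f x\<bar> \<le> \<bar>\<bar>f 0\<bar> + variation_upto f 1\<bar>"
      using assms(3) BV01_abs_le[OF assms(1)] by fastforce
    then show "norm (f x * g x) \<le> norm ((\<bar>f 0\<bar> + variation_upto f 1) * \<bar>g x\<bar>)"
      by (simp add: abs_mult mult_right_mono)
  qed
qed

lemma BV01_set_integral_oscillation:
  assumes BV: "BV01 f" and "0 \<le> a" "a \<le> b" "b \<le> 1" and Q: "set_integrable lborel {a<..b} Q"
  shows "\<bar>LINT x:{a<..b}|lborel. (f x - f b) * Q x\<bar>
    \<le> (variation_upto f b - variation_upto f a) * (LINT x:{a<..b}|lborel. \<bar>Q x\<bar>)"
proof -
  have oscillation: "\<bar>f x - f b\<bar> \<le> variation_upto f b - variation_upto f a" if "x \<in> {a<..b}" for x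
    using that assms variation_upto_increment[OF BV, of x b] variation_upto_mono[OF BV, of a x]
    by (auto simp: abs_minus_commute)
  have "set_integrable lborel {a<..b} (\<lambda>x. f x * Q x - f b * Q x)"
    using assms by (intro set_integral_diff BV01_set_integrable_mult set_integrable_mult_right) auto
  then have integrable: "set_integrable lborel {a<..b} (\<lambda>x. (f x - f b) * Q x)"
    by (simp add: left_diff_distrib)
  have "\<bar>LINT x:{a<..b}|lborel. (f x - f b) * Q x\<bar> \<le> (LINT x:{a<..b}|lborel. \<bar>(f x - f b) * Q x\<bar>)"
    using set_integral_norm_bound[OF integrable] by simp
  also have "\<dots> \<le> (LINT x:{a<..b}|lborel. (variation_upto f b - variation_upto f a) * \<bar>Q x\<bar>)"
    using integrable Q oscillation
    by (intro set_integral_mono set_integrable_abs set_integrable_mult_right)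
      (auto simp: abs_mult intro: mult_right_mono)
  finally show ?thesis by simp
qed

lemma abs_sum_by_parts_le:
  fixes u G w :: "nat \<Rightarrow> real"
  assumes "0 < n" "G 0 = 0"
    and u_diff: "\<And>i. i < n \<Longrightarrow> \<bar>u (Suc i) - u i\<bar> \<le> w i"
    and G_bound: "\<And>i. i < n \<Longrightarrow> \<bar>G i\<bar> \<le> B"
    and G_diff: "\<And>i. i < n \<Longrightarrow> \<bar>G (Suc i) - G i\<bar> \<le> D"
  shows "\<bar>\<Sum>i<n. u (Suc i) * (G (Suc i) - G i)\<bar> \<le> (\<Sum>i<n. w i) * B + \<bar>u n\<bar> * (B + D)"
proof -
  have by_parts: "(\<Sum>i<m. u (Suc i) * (G (Suc i) - G i)) = u m * G m - (\<Sum>i<m. (u (Suc i) - u i) * G i)"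
    for m
    using \<open>G 0 = 0\<close> by (induction m) (auto simp: algebra_simps)
  have "\<bar>\<Sum>i<n. (u (Suc i) - u i) * G i\<bar> \<le> (\<Sum>i<n. \<bar>u (Suc i) - u i\<bar> * \<bar>G i\<bar>)"
    by (rule order_trans[OF sum_abs]) (simp add: abs_mult)
  also have "\<dots> \<le> (\<Sum>i<n. w i * B)"
    using u_diff G_bound by (intro sum_mono mult_mono) (auto intro: order_trans[OF abs_ge_zero])
  finally have sum_bound: "\<bar>\<Sum>i<n. (u (Suc i) - u i) * G i\<bar> \<le> (\<Sum>i<n. w i) * B"
    by (simp add: sum_distrib_right)
  obtain m where m: "n = Suc m"
    using \<open>0 < n\<close> gr0_conv_Suc by blast
  have "\<bar>G n\<bar> \<le> \<bar>G m\<bar> + \<bar>G (Suc m) - G m\<bar>"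
    unfolding m by linarith
  also have "\<dots> \<le> B + D"
    using G_bound G_diff m by (intro add_mono) auto
  finally have "\<bar>u n * G n\<bar> \<le> \<bar>u n\<bar> * (B + D)"
    unfolding abs_mult by (intro mult_left_mono) auto
  with sum_bound show ?thesis
    unfolding by_parts by linarith
qed

lemma sum_variation_upto_grid_le:
  assumes "BV01 f" "0 < n"
  shows "(\<Sum>i<n. variation_upto f (real (Suc i) / real n) - variation_upto f (real i / real n))
    \<le> variation_upto f 1"
proof -
  have "(\<Sum>i<n. variation_upto f (real (Suc i) / real n) - variation_upto f (real i / real n))
      = variation_upto f (real n / real n) - variation_upto f (real 0 / real n)"
    by (rule sum_lessThan_telescope)
  then show ?thesis
    using assms by (simp add: variation_upto_nonneg)
qed

lemma BV01_integral_mult_approx: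
  fixes Q :: "real \<Rightarrow> real"
  assumes BV: "BV01 f" and Q: "set_integrable lborel {0..1} Q" and "0 < n"
    and cells: "\<And>i. i < n \<Longrightarrow> (LINT x:grid_cell n i|lborel. \<bar>Q x\<bar>) \<le> E"
  shows "\<bar>(LINT x:{0..1}|lborel. f x * Q x)
      - (\<Sum>i<n. f (real (Suc i) / real n) * (LINT x:grid_cell n i|lborel. Q x))\<bar>
    \<le> variation_upto f 1 * E"
proof -
  define w where "w i = variation_upto f (real (Suc i) / real n) - variation_upto f (real i / real n)" for i
  have fQ: "set_integrable lborel {0..1} (\<lambda>x. f x * Q x)"
    using BV Q by (intro BV01_set_integrable_mult) auto
  have "(LINT x:{0..1}|lborel. f x * Q x)
      - (\<Sum>i<n. f (real (Suc i) / real n) * (LINT x:grid_cell n i|lborel. Q x))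
    = (\<Sum>i<n. LINT x:grid_cell n i|lborel. (f x - f (real (Suc i) / real n)) * Q x)"
    using set_integral_grid[OF fQ, of n n] \<open>0 < n\<close>
      set_integrable_grid_cell[OF fQ] set_integrable_grid_cell[OF Q]
    by (simp add: sum_subtractf left_diff_distrib set_integral_diff)
  also have "\<bar>\<dots>\<bar> \<le> (\<Sum>i<n. w i * E)"
  proof (rule order_trans[OF sum_abs sum_mono])
    fix i assume "i \<in> {..<n}"
    then have i: "i < n" by simp
    have "\<bar>LINT x:grid_cell n i|lborel. (f x - f (real (Suc i) / real n)) * Q x\<bar>
        \<le> w i * (LINT x:grid_cell n i|lborel. \<bar>Q x\<bar>)"
      using BV01_set_integral_oscillation[OF BV grid_cell_bounds[OF i]
          set_integrable_grid_cell[OF Q i, unfolded grid_cell_def]]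
      by (simp add: w_def grid_cell_def)
    also have "\<dots> \<le> w i * E"
      using cells[OF i] variation_upto_mono[OF BV grid_cell_bounds[OF i]]
      by (auto simp: w_def intro: mult_left_mono)
    finally show "\<bar>LINT x:grid_cell n i|lborel. (f x - f (real (Suc i) / real n)) * Q x\<bar> \<le> w i * E" .
  qed
  also have "\<dots> \<le> variation_upto f 1 * E"
  proof -
    have "(\<Sum>i<n. w i) \<le> variation_upto f 1"
      unfolding w_def using BV \<open>0 < n\<close> by (rule sum_variation_upto_grid_le)
    moreover have "0 \<le> E"
      using cells[OF \<open>0 < n\<close>] set_integral_abs_nonneg[of lborel "grid_cell n 0" Q] by linarith
    ultimately show ?thesis
      unfolding sum_distrib_right[symmetric] by (rule mult_right_mono)
  qed
  finally show ?thesis .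
qed

lemma BV01_integral_mult_estimate:
  fixes Q :: "real \<Rightarrow> real"
  assumes BV: "BV01 f" and Q: "set_integrable lborel {0..1} Q" and "0 < n" "0 \<le> B"
    and cells: "\<And>i. i < n \<Longrightarrow> (LINT x:grid_cell n i|lborel. \<bar>Q x\<bar>) \<le> E"
    and prefixes: "\<And>i. 0 < i \<Longrightarrow> i < n \<Longrightarrow> \<bar>LINT x:{0..real i / real n}|lborel. Q x\<bar> \<le> B"
  shows "\<bar>LINT x:{0..1}|lborel. f x * Q x\<bar> \<le> (2 * variation_upto f 1 + \<bar>f 0\<bar>) * (B + E)"
proof -
  define V where "V = variation_upto f 1"
  define G where "G i = (LINT x:{0..real i / real n}|lborel. Q x)" for i
  define w where "w i = variation_upto f (real (Suc i) / real n) - variation_upto f (real i / real n)" for i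
  have G_diff: "G (Suc i) - G i = (LINT x:grid_cell n i|lborel. Q x)" if "i < n" for i
    using that set_integral_grid[OF Q, of "Suc i" n] set_integral_grid[OF Q, of i n] by (simp add: G_def)
  have "\<bar>\<Sum>i<n. f (real (Suc i) / real n) * (G (Suc i) - G i)\<bar>
      \<le> (\<Sum>i<n. w i) * B + \<bar>f (real n / real n)\<bar> * (B + E)"
  proof (rule abs_sum_by_parts_le)
    fix i assume "i < n"
    show "\<bar>f (real (Suc i) / real n) - f (real i / real n)\<bar> \<le> w i"
      using variation_upto_increment[OF BV grid_cell_bounds[OF \<open>i < n\<close>]] by (simp add: w_def)
    show "\<bar>G i\<bar> \<le> B"
      using \<open>i < n\<close> prefixes[of i] \<open>0 \<le> B\<close> by (cases "i = 0") (simp_all add: G_def set_integral_singleton)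
    show "\<bar>G (Suc i) - G i\<bar> \<le> E"
      using set_integral_norm_bound[OF set_integrable_grid_cell[OF Q \<open>i < n\<close>]] cells[OF \<open>i < n\<close>]
      by (simp add: G_diff[OF \<open>i < n\<close>])
  qed (use \<open>0 < n\<close> in \<open>simp_all add: G_def set_integral_singleton\<close>)
  also have "\<dots> \<le> V * B + (\<bar>f 0\<bar> + V) * (B + E)"
  proof (intro add_mono mult_right_mono)
    show "(\<Sum>i<n. w i) \<le> V"
      unfolding w_def V_def using BV \<open>0 < n\<close> by (rule sum_variation_upto_grid_le)
    show "\<bar>f (real n / real n)\<bar> \<le> \<bar>f 0\<bar> + V"
      using BV01_abs_le[OF BV, of 1] \<open>0 < n\<close> by (simp add: V_def)
    show "0 \<le> B + E"
      using \<open>0 \<le> B\<close> cells[OF \<open>0 < n\<close>] set_integral_abs_nonneg[of lborel "grid_cell n 0" Q] by linarith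
  qed fact
  finally have "\<bar>\<Sum>i<n. f (real (Suc i) / real n) * (LINT x:grid_cell n i|lborel. Q x)\<bar>
      \<le> V * B + (\<bar>f 0\<bar> + V) * (B + E)"
    using G_diff by simp
  then have "\<bar>LINT x:{0..1}|lborel. f x * Q x\<bar> \<le> V * E + (V * B + (\<bar>f 0\<bar> + V) * (B + E))"
    using BV01_integral_mult_approx[OF BV Q \<open>0 < n\<close> cells, folded V_def] by linarith
  then show ?thesis
    by (simp add: V_def algebra_simps)
qed

section \<open>Square summability by testing against l2\<close>

lemma summable_div_square_partial_sums:
  fixes b :: "nat \<Rightarrow> real"
  assumes nonneg: "\<And>k. 0 \<le> b k"
  shows "summable (\<lambda>k. b k / (1 + (\<Sum>j\<le>k. b j))^2)"
proof -
  define S where "S n = 1 + (\<Sum>j<n. b j)" for n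
  have S_ge_1: "1 \<le> S n" for n
    unfolding S_def using nonneg by (simp add: sum_nonneg)
  have S_Suc: "S (Suc k) = S k + b k" for k
    unfolding S_def by simp
  have telescope: "b k / (S (Suc k))^2 \<le> 1 / S k - 1 / S (Suc k)" for k
  proof -
    have "b k / (S (Suc k))^2 \<le> b k / (S k * S (Suc k))"
      using S_ge_1[of k] S_ge_1[of "Suc k"] nonneg[of k] unfolding power2_eq_square S_Suc
      by (intro divide_left_mono mult_right_mono mult_pos_pos) auto
    also have "\<dots> = 1 / S k - 1 / S (Suc k)"
      using S_ge_1[of k] S_ge_1[of "Suc k"] unfolding S_Suc by (simp add: field_simps)
    finally show ?thesis .
  qed
  have "summable (\<lambda>k. b k / (S (Suc k))^2)"
  proof (rule summableI_nonneg_bounded)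
    fix n
    have "(\<Sum>k<n. b k / (S (Suc k))^2) \<le> (\<Sum>k<n. 1 / S k - 1 / S (Suc k))"
      by (intro sum_mono telescope)
    also have "\<dots> = 1 / S 0 - 1 / S n"
      by (rule sum_lessThan_telescope')
    also have "\<dots> \<le> 1"
      using S_ge_1[of n] by (simp add: S_def)
    finally show "(\<Sum>k<n. b k / (S (Suc k))^2) \<le> 1" .
  qed (simp add: nonneg)
  then show ?thesis
    by (simp add: S_def lessThan_Suc_atMost)
qed

text \<open>The Abel--Dini theorem.\<close>

lemma not_summable_div_partial_sums:
  fixes b :: "nat \<Rightarrow> real"
  assumes nonneg: "\<And>k. 0 \<le> b k" and "\<not> summable b"
  shows "\<not> summable (\<lambda>k. b k / (1 + (\<Sum>j\<le>k. b j)))"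
proof
  define S where "S n = 1 + (\<Sum>j<n. b j)" for n
  have S_ge_1: "1 \<le> S n" for n
    unfolding S_def using nonneg by (simp add: sum_nonneg)
  have S_mono: "S m \<le> S n" if "m \<le> n" for m n
    unfolding S_def using that nonneg by (intro add_left_mono sum_mono2) auto
  have S_unbounded: "\<exists>n. x < S n" for x
  proof (rule ccontr)
    assume bounded: "\<nexists>n. x < S n"
    have "(\<Sum>j<n. b j) \<le> x" for n
      using bounded[unfolded not_ex, rule_format, of n] unfolding S_def by linarith
    then have "summable b"
      using nonneg by (intro summableI_nonneg_bounded[of b x])
    with \<open>\<not> summable b\<close> show False ..
  qed
  assume "summable (\<lambda>k. b k / (1 + (\<Sum>j\<le>k. b j)))"
  then have "summable (\<lambda>k. b k / S (Suc k))"
    by (simp add: S_def lessThan_Suc_atMost)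
  then obtain N where N: "\<And>n. norm (\<Sum>k=N..<n. b k / S (Suc k)) < 1/2"
    unfolding summable_Cauchy by (metis half_gt_zero_iff order_refl zero_less_one)
  obtain n where n: "2 * S N < S n"
    using S_unbounded by blast
  then have "N \<le> n"
    using S_mono[of n N] S_ge_1[of N] by (cases "N \<le> n") auto
  have "1/2 \<le> (S n - S N) / S n"
    using n S_ge_1[of N] by (simp add: field_simps)
  also have "\<dots> = (\<Sum>k=N..<n. b k / S n)"
    using sum.atLeastLessThan_concat[OF _ \<open>N \<le> n\<close>, of 0 b, symmetric]
    by (simp add: S_def atLeast0LessThan flip: sum_divide_distrib)
  also have "\<dots> \<le> (\<Sum>k=N..<n. b k / S (Suc k))"
    using nonneg S_ge_1 S_mono by (intro sum_mono divide_left_mono mult_pos_pos)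
      (auto intro: less_le_trans[OF zero_less_one])
  also have "\<dots> < 1/2"
    using N[of n] nonneg S_ge_1 by (simp add: sum_nonneg)
  finally show False by simp
qed

text \<open>Landau's converse of the Cauchy--Schwarz inequality.\<close>

lemma square_summable_if_bounded_pairings:
  fixes \<beta> :: "nat \<Rightarrow> real"
  assumes "\<And>a. summable (\<lambda>k. (a k)^2) \<Longrightarrow> (\<lambda>n. \<Sum>k<n. a k * \<beta> k) \<in> O(\<lambda>_. 1)"
  shows "summable (\<lambda>k. (\<beta> k)^2)"
proof (rule ccontr)
  assume diverges: "\<not> summable (\<lambda>k. (\<beta> k)^2)"
  define a where "a k = \<beta> k / (1 + (\<Sum>j\<le>k. (\<beta> j)^2))" for k
  have "summable (\<lambda>k. (a k)^2)"
    using summable_div_square_partial_sums[of "\<lambda>k. (\<beta> k)^2"]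
    by (simp add: a_def power_divide)
  from assms[OF this] obtain C where "\<forall>\<^sub>F n in sequentially. \<bar>\<Sum>k<n. a k * \<beta> k\<bar> \<le> C"
    by (elim landau_o.bigE) auto
  then obtain N where N: "\<And>n. N \<le> n \<Longrightarrow> \<bar>\<Sum>k<n. a k * \<beta> k\<bar> \<le> C"
    unfolding eventually_sequentially by blast
  have a_mult: "a k * \<beta> k = (\<beta> k)^2 / (1 + (\<Sum>j\<le>k. (\<beta> j)^2))" for k
    by (simp add: a_def power2_eq_square)
  have a_mult_nonneg: "0 \<le> a k * \<beta> k" for k
    unfolding a_mult by (simp add: sum_nonneg)
  have "summable (\<lambda>k. a k * \<beta> k)"
  proof (rule summableI_nonneg_bounded[OF a_mult_nonneg])
    fix n
    have "(\<Sum>k<n. a k * \<beta> k) \<le> (\<Sum>k<max n N. a k * \<beta> k)"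
      using a_mult_nonneg by (intro sum_mono2) auto
    also have "\<dots> \<le> C"
      using N[of "max n N"] by simp
    finally show "(\<Sum>k<n. a k * \<beta> k) \<le> C" .
  qed
  with not_summable_div_partial_sums[of "\<lambda>k. (\<beta> k)^2"] diverges show False
    by (simp add: a_mult)
qed

lemma square_summable_Suc_if_bounded_pairings:
  fixes \<beta> :: "nat \<Rightarrow> real"
  assumes "\<And>a. summable (\<lambda>k. (a k)^2) \<Longrightarrow> (\<lambda>n. \<Sum>k=1..n. a k * \<beta> k) \<in> O(\<lambda>_. 1)"
  shows "summable (\<lambda>k. (\<beta> (Suc k))^2)"
proof (rule square_summable_if_bounded_pairings)
  fix a :: "nat \<Rightarrow> real"
  assume "summable (\<lambda>k. (a k)^2)"
  then have "summable (\<lambda>k. (a (k - 1))^2)"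
    by (subst summable_Suc_iff[symmetric]) simp
  from assms[OF this] show "(\<lambda>n. \<Sum>k<n. a k * \<beta> (Suc k)) \<in> O(\<lambda>_. 1)"
    by (simp add: sum.atLeast1_atMost_eq)
qed

section \<open>Growth of the weights\<close>

lemma ln_div_square_ln_Suc_le: "ln (real n) / (ln (real n + 1))^2 \<le> 1 / ln 2"
proof (cases "n = 0")
  case False
  then have "0 \<le> ln (real n)" "ln (real n) \<le> ln (real n + 1)" "ln 2 \<le> ln (real n + 1)"
    by auto
  moreover have "0 < ln (2::real)"
    by simp
  ultimately have "ln (real n) * ln 2 \<le> ln (real n + 1) * ln (real n + 1)" "0 < ln (real n + 1)"
    by (auto intro: mult_mono)
  then show ?thesis
    using \<open>0 < ln 2\<close> by (simp add: field_simps power2_eq_square)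
qed simp

lemma bigo_mult_ln_if_bigo_sqrt_div_ln_square:
  fixes d :: "nat \<Rightarrow> real"
  assumes "d \<in> O(\<lambda>n. sqrt (real n) / (ln (real n + 1))^2)"
  shows "(\<lambda>n. d n * ln (real n)) \<in> O(\<lambda>n. sqrt (real n))"
proof -
  have "(\<lambda>n. d n * ln (real n)) \<in> O(\<lambda>n. sqrt (real n) / (ln (real n + 1))^2 * ln (real n))"
    using assms by (rule landau_o.big.mult_right)
  also have "(\<lambda>n. sqrt (real n) / (ln (real n + 1))^2 * ln (real n)) \<in> O(\<lambda>n. sqrt (real n))"
  proof (intro bigoI[where c = "1 / ln 2"] always_eventually allI)
    fix n :: nat
    have "sqrt (real n) / (ln (real n + 1))^2 * ln (real n)
        = sqrt (real n) * (ln (real n) / (ln (real n + 1))^2)"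
      by simp
    also have "\<dots> \<le> sqrt (real n) * (1 / ln 2)"
      using ln_div_square_ln_Suc_le by (intro mult_left_mono) auto
    finally show "norm (sqrt (real n) / (ln (real n + 1))^2 * ln (real n)) \<le> 1 / ln 2 * norm (sqrt (real n))"
      by (cases "n = 0") (simp_all add: abs_mult)
  qed
  finally show ?thesis .
qed

lemma bigo_sqrt_imp_square_le_linear:
  fixes g :: "nat \<Rightarrow> real"
  assumes "g \<in> O(\<lambda>n. sqrt (real n))"
  obtains L where "\<And>k n. k \<le> n \<Longrightarrow> 0 < n \<Longrightarrow> (g k)^2 \<le> L * real n"
proof -
  obtain c where "\<forall>\<^sub>F n in sequentially. \<bar>g n\<bar> \<le> c * sqrt (real n)"
    using assms by (elim landau_o.bigE) simp
  then obtain N where N: "\<And>n. N \<le> n \<Longrightarrow> \<bar>g n\<bar> \<le> c * sqrt (real n)"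
    unfolding eventually_sequentially by blast
  define L where "L = (\<Sum>j<N. (g j)^2) + c^2"
  have L_nonneg: "0 \<le> L"
    unfolding L_def by (simp add: sum_nonneg)
  have "(g k)^2 \<le> L * real n" if "k \<le> n" "0 < n" for k n
  proof (cases "k < N")
    case True
    then have "(g k)^2 \<le> (\<Sum>j<N. (g j)^2)"
      by (intro member_le_sum) auto
    also have "\<dots> \<le> L"
      by (simp add: L_def)
    also have "\<dots> \<le> L * real n"
      using L_nonneg \<open>0 < n\<close> by (simp add: mult_le_cancel_left1)
    finally show ?thesis .
  next
    case False
    then have "\<bar>g k\<bar>^2 \<le> (c * sqrt (real k))^2"
      using N[of k] by (intro power_mono) auto
    then have "(g k)^2 \<le> c^2 * real k"
      by (simp add: power_mult_distrib)
    also have "\<dots> \<le> L * real n"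
      using \<open>k \<le> n\<close> by (intro mult_mono) (auto simp: L_def sum_nonneg)
    finally show ?thesis .
  qed
  then show ?thesis by (rule that)
qed

lemma sum_weighted_squares_div_le:
  fixes g a :: "nat \<Rightarrow> real"
  assumes g: "\<And>k n. k \<le> n \<Longrightarrow> 0 < n \<Longrightarrow> (g k)^2 \<le> L * real n"
    and a: "summable (\<lambda>k. (a k)^2)" and "0 < n"
  shows "(\<Sum>k=1..n. (g k)^2 * (a k)^2) / real n \<le> L * (\<Sum>k. (a k)^2)"
proof -
  have "(g 0)^2 \<le> L"
    using g[of 0 1] by simp
  then have "0 \<le> L"
    by (rule order_trans[OF zero_le_power2])
  have "(\<Sum>k=1..n. (g k)^2 * (a k)^2) \<le> (\<Sum>k=1..n. L * real n * (a k)^2)"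
    using g \<open>0 < n\<close> by (intro sum_mono mult_right_mono) auto
  also have "\<dots> = L * real n * (\<Sum>k=1..n. (a k)^2)"
    by (simp add: sum_distrib_left)
  also have "\<dots> \<le> L * real n * (\<Sum>k. (a k)^2)"
    using a \<open>0 \<le> L\<close> by (intro mult_left_mono sum_le_suminf) auto
  finally show ?thesis
    using \<open>0 < n\<close> by (simp add: field_simps)
qed

section \<open>Orthonormal systems\<close>

context
  fixes \<phi> :: "nat \<Rightarrow> real \<Rightarrow> real"
  assumes ONS: "orthonormal_system \<phi>"
begin

lemma orthonormal_system_inner:
  "1 \<le> j \<Longrightarrow> 1 \<le> k \<Longrightarrow> (LINT x:{0..1}|lborel. \<phi> j x * \<phi> k x) = (if j = k then 1 else 0)"
  using ONS unfolding orthonormal_system_def by auto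

lemma orthonormal_system_integrable:
  assumes "1 \<le> k"
  shows "set_integrable lborel {0..1} (\<phi> k)"
proof (rule set_integrable_bound)
  show "set_integrable lborel {0..1} (\<lambda>x. 1 + (\<phi> k x)^2)"
    using ONS assms borel_integrable_atLeastAtMost'[OF continuous_on_const]
    unfolding orthonormal_system_def by (intro set_integral_add) auto
  show "set_borel_measurable lborel {0..1} (\<phi> k)"
    using ONS assms unfolding orthonormal_system_def by auto
  have "\<bar>t\<bar> \<le> \<bar>1 + t^2\<bar>" for t :: real
    using sum_squares_bound[of "\<bar>t\<bar>" 1] by (simp add: power2_abs)
  then show "AE x in lborel. x \<in> {0..1} \<longrightarrow> norm (\<phi> k x) \<le> norm (1 + (\<phi> k x)^2)"
    by simp
qed

lemma orthonormal_system_product_integrable: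
  assumes "1 \<le> j" "1 \<le> k"
  shows "set_integrable lborel {0..1} (\<lambda>x. \<phi> j x * \<phi> k x)"
proof (rule set_integrable_bound)
  show "set_integrable lborel {0..1} (\<lambda>x. (\<phi> j x)^2 + (\<phi> k x)^2)"
    using ONS assms unfolding orthonormal_system_def by (intro set_integral_add) auto
  show "set_borel_measurable lborel {0..1} (\<lambda>x. \<phi> j x * \<phi> k x)"
    using ONS assms unfolding orthonormal_system_def by (intro set_borel_measurable_mult) auto
  have "\<bar>s * t\<bar> \<le> \<bar>s^2 + t^2\<bar>" for s t :: real
    using sum_squares_bound[of "\<bar>s\<bar>" "\<bar>t\<bar>"] mult_nonneg_nonneg[OF abs_ge_zero abs_ge_zero, of s t]
    unfolding abs_mult power2_abs by linarith
  then show "AE x in lborel. x \<in> {0..1} \<longrightarrow>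
      norm (\<phi> j x * \<phi> k x) \<le> norm ((\<phi> j x)^2 + (\<phi> k x)^2)"
    by simp
qed

lemma orthonormal_system_sum_integrable:
  "K \<subseteq> {1..} \<Longrightarrow> set_integrable lborel {0..1} (\<lambda>x. \<Sum>k\<in>K. c k * \<phi> k x)"
  by (intro set_integrable_sum set_integrable_mult_right orthonormal_system_integrable) auto

lemma orthonormal_system_integral_square_sum:
  assumes "finite K" "K \<subseteq> {1..}"
  shows "set_integrable lborel {0..1} (\<lambda>x. (\<Sum>k\<in>K. c k * \<phi> k x)^2)"
    and "(LINT x:{0..1}|lborel. (\<Sum>k\<in>K. c k * \<phi> k x)^2) = (\<Sum>k\<in>K. (c k)^2)"
proof -
  have square: "(\<Sum>k\<in>K. c k * \<phi> k x)^2 = (\<Sum>j\<in>K. \<Sum>k\<in>K. c j * c k * (\<phi> j x * \<phi> k x))" for x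
    unfolding power2_eq_square sum_product by (simp add: algebra_simps)
  have terms: "set_integrable lborel {0..1} (\<lambda>x. c j * c k * (\<phi> j x * \<phi> k x))"
    if "j \<in> K" "k \<in> K" for j k
    using that assms(2) by (intro set_integrable_mult_right orthonormal_system_product_integrable) auto
  show "set_integrable lborel {0..1} (\<lambda>x. (\<Sum>k\<in>K. c k * \<phi> k x)^2)"
    unfolding square by (intro set_integrable_sum terms)
  have "(LINT x:{0..1}|lborel. (\<Sum>k\<in>K. c k * \<phi> k x)^2)
      = (\<Sum>j\<in>K. \<Sum>k\<in>K. c j * c k * (LINT x:{0..1}|lborel. \<phi> j x * \<phi> k x))"
    unfolding square using terms by (simp add: set_integral_sum set_integrable_sum)
  also have "\<dots> = (\<Sum>j\<in>K. \<Sum>k\<in>K. c j * c k * (if j = k then 1 else 0))"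
    using assms(2) by (intro sum.cong refl) (simp add: orthonormal_system_inner subset_iff)
  also have "\<dots> = (\<Sum>k\<in>K. (c k)^2)"
    using assms(1) by (simp add: power2_eq_square if_distrib cong: if_cong)
  finally show "(LINT x:{0..1}|lborel. (\<Sum>k\<in>K. c k * \<phi> k x)^2) = (\<Sum>k\<in>K. (c k)^2)" .
qed

lemma orthonormal_sum_integral_abs_grid_cell_le:
  assumes "finite K" "K \<subseteq> {1..}" "i < n"
  shows "(LINT x:grid_cell n i|lborel. \<bar>\<Sum>k\<in>K. c k * \<phi> k x\<bar>) \<le> ((\<Sum>k\<in>K. (c k)^2) / real n + 1) / 2"
proof -
  define Q where "Q x = (\<Sum>k\<in>K. c k * \<phi> k x)" for x
  have Q: "set_integrable lborel {0..1} Q"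
    unfolding Q_def using assms(2) by (rule orthonormal_system_sum_integrable)
  have Q_square: "set_integrable lborel {0..1} (\<lambda>x. (Q x)^2)"
      "(LINT x:{0..1}|lborel. (Q x)^2) = (\<Sum>k\<in>K. (c k)^2)"
    unfolding Q_def using orthonormal_system_integral_square_sum[OF assms(1,2)] by auto
  have "(LINT x:grid_cell n i|lborel. \<bar>Q x\<bar>)
      \<le> (1 / real n) / 2 * (LINT x:grid_cell n i|lborel. (Q x)^2)
        + measure lborel (grid_cell n i) / (2 * (1 / real n))"
    using assms(3) grid_cell_bounds[OF assms(3)]
      set_integrable_grid_cell[OF Q assms(3)] set_integrable_grid_cell[OF Q_square(1) assms(3)]
    by (intro set_integral_abs_le_AM_GM) (auto simp: grid_cell_def)
  also have "(LINT x:grid_cell n i|lborel. (Q x)^2) \<le> (\<Sum>k\<in>K. (c k)^2)"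
    using set_integral_mono_set[OF Q_square(1) _ grid_cell_subset[OF assms(3)]] Q_square(2)
    by (simp add: grid_cell_def)
  finally show ?thesis
    using assms(3) by (simp add: Q_def measure_grid_cell field_simps)
qed

lemma BV01_integral_mult_orthonormal_sum:
  assumes "BV01 f" "K \<subseteq> {1..}"
  shows "(LINT x:{0..1}|lborel. f x * (\<Sum>k\<in>K. c k * \<phi> k x)) = (\<Sum>k\<in>K. c k * Fourier_coeff \<phi> f k)"
proof -
  have "set_integrable lborel {0..1} (\<lambda>x. c k * (f x * \<phi> k x))" if "k \<in> K" for k
    using that assms
    by (intro set_integrable_mult_right BV01_set_integrable_mult orthonormal_system_integrable) auto
  then show ?thesis
    unfolding Fourier_coeff_def
    by (simp add: sum_distrib_left set_integral_sum mult.left_commute)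
qed

lemma Fourier_partial_sum_estimate:
  assumes BV: "BV01 f" and "2 \<le> n"
  shows "\<bar>\<Sum>k=1..n. c k * Fourier_coeff \<phi> f k\<bar> \<le> (2 * variation_upto f 1 + \<bar>f 0\<bar>) *
    (1 + Max ((\<lambda>i. \<bar>LINT x:{0..real i / real n}|lborel. (\<Sum>k=1..n. c k * \<phi> k x)\<bar>) ` {1..<n})
       + (\<Sum>k=1..n. (c k)^2) / real n)"
proof -
  define Q where "Q x = (\<Sum>k=1..n. c k * \<phi> k x)" for x
  define A where "A = (\<Sum>k=1..n. (c k)^2)"
  define B where "B = Max ((\<lambda>i. \<bar>LINT x:{0..real i / real n}|lborel. Q x\<bar>) ` {1..<n})"
  have Q: "set_integrable lborel {0..1} Q"
    unfolding Q_def by (intro orthonormal_system_sum_integrable) auto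
  have cells: "(LINT x:grid_cell n i|lborel. \<bar>Q x\<bar>) \<le> (A / real n + 1) / 2" if "i < n" for i
    unfolding Q_def A_def using that by (intro orthonormal_sum_integral_abs_grid_cell_le) auto
  have prefixes: "\<bar>LINT x:{0..real i / real n}|lborel. Q x\<bar> \<le> B" if "0 < i" "i < n" for i
    unfolding B_def using that by (intro Max_ge) auto
  have "0 \<le> B"
    using order_trans[OF abs_ge_zero prefixes[of 1]] \<open>2 \<le> n\<close> by simp
  have "\<bar>LINT x:{0..1}|lborel. f x * Q x\<bar> \<le> (2 * variation_upto f 1 + \<bar>f 0\<bar>) * (B + (A / real n + 1) / 2)"
    using \<open>2 \<le> n\<close> \<open>0 \<le> B\<close> by (intro BV01_integral_mult_estimate[OF BV Q _ _ cells prefixes]) auto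
  also have "\<dots> \<le> (2 * variation_upto f 1 + \<bar>f 0\<bar>) * (1 + B + A / real n)"
  proof (rule mult_left_mono)
    have half: "(x + 1) / 2 \<le> 1 + x" if "0 \<le> x" for x :: real
      using that by (simp add: field_simps)
    have "0 \<le> A / real n"
      by (simp add: A_def sum_nonneg)
    from half[OF this] show "B + (A / real n + 1) / 2 \<le> 1 + B + A / real n"
      by linarith
  qed (use variation_upto_nonneg[OF BV, of 1] in simp)
  finally show ?thesis
    using BV01_integral_mult_orthonormal_sum[OF BV, of "{1..n}" c]
    by (simp add: Q_def A_def B_def)
qed

lemma bounded_pairings_Fourier_coeff:
  assumes BV: "BV01 f"
    and L: "\<And>k n. k \<le> n \<Longrightarrow> 0 < n \<Longrightarrow> (d k * ln (real k))^2 \<le> L * real n"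
    and a: "summable (\<lambda>k. (a k)^2)" and B: "(\<lambda>n. Bn \<phi> d a n) \<in> O(\<lambda>_. 1)"
  shows "(\<lambda>n. \<Sum>k=1..n. a k * (d k * Fourier_coeff \<phi> f k * ln (real k))) \<in> O(\<lambda>_. 1)"
proof -
  define K where "K = 2 * variation_upto f 1 + \<bar>f 0\<bar>"
  have "0 \<le> K"
    using variation_upto_nonneg[OF BV, of 1] by (simp add: K_def)
  obtain C where "\<forall>\<^sub>F n in sequentially. \<bar>Bn \<phi> d a n\<bar> \<le> C"
    using B by (elim landau_o.bigE) auto
  then have "\<forall>\<^sub>F n in sequentially.
      \<bar>\<Sum>k=1..n. a k * (d k * Fourier_coeff \<phi> f k * ln (real k))\<bar> \<le> K * (1 + C + L * (\<Sum>k. (a k)^2))"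
    using eventually_ge_at_top[of 2]
  proof eventually_elim
    case (elim n)
    define c where "c k = d k * a k * ln (real k)" for k
    have "\<bar>\<Sum>k=1..n. a k * (d k * Fourier_coeff \<phi> f k * ln (real k))\<bar>
        = \<bar>\<Sum>k=1..n. c k * Fourier_coeff \<phi> f k\<bar>"
      unfolding c_def by (simp only: mult_ac)
    also have "\<dots> \<le> K * (1 + Bn \<phi> d a n + (\<Sum>k=1..n. (c k)^2) / real n)"
      using Fourier_partial_sum_estimate[OF BV \<open>2 \<le> n\<close>, of c]
      unfolding K_def Bn_def Qn_def c_def .
    also have "\<dots> \<le> K * (1 + C + L * (\<Sum>k. (a k)^2))"
    proof (intro mult_left_mono add_mono order_refl)
      show "Bn \<phi> d a n \<le> C"
        using elim by simp
      have "(c k)^2 = (d k * ln (real k))^2 * (a k)^2" for k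
        by (simp add: c_def power_mult_distrib mult_ac)
      moreover have "0 < n"
        using elim by simp
      ultimately show "(\<Sum>k=1..n. (c k)^2) / real n \<le> L * (\<Sum>k. (a k)^2)"
        using sum_weighted_squares_div_le[OF L a] by simp
    qed (rule \<open>0 \<le> K\<close>)
    finally show ?case .
  qed
  then show ?thesis
    by (intro bigoI[where c = "K * (1 + C + L * (\<Sum>k. (a k)^2))"]) simp
qed

end

theorem theorem3:
  fixes \<phi> :: "nat \<Rightarrow> real \<Rightarrow> real" and d :: "nat \<Rightarrow> real" and f :: "real \<Rightarrow> real"
  assumes "orthonormal_system \<phi>"
    and "d \<in> O(\<lambda>n. sqrt (real n) / (ln (real n + 1))^2)"
    and "\<forall>a :: nat \<Rightarrow> real. summable (\<lambda>n. (a n)^2) \<longrightarrow> (\<lambda>n. Bn \<phi> d a n) \<in> O(\<lambda>_. 1)"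
    and "BV01 f"
  shows "summable (\<lambda>k. (d (Suc k))^2 * (Fourier_coeff \<phi> f (Suc k))^2 * (ln (real (Suc k)))^2)"
proof -
  obtain L where L: "\<And>k n. k \<le> n \<Longrightarrow> 0 < n \<Longrightarrow> (d k * ln (real k))^2 \<le> L * real n"
    using bigo_sqrt_imp_square_le_linear[OF bigo_mult_ln_if_bigo_sqrt_div_ln_square[OF assms(2)]] by blast
  have "summable (\<lambda>k. (d (Suc k) * Fourier_coeff \<phi> f (Suc k) * ln (real (Suc k)))^2)"
  proof (rule square_summable_Suc_if_bounded_pairings[where \<beta> = "\<lambda>k. d k * Fourier_coeff \<phi> f k * ln (real k)"])
    fix a :: "nat \<Rightarrow> real"
    assume "summable (\<lambda>k. (a k)^2)"
    with assms(3) show "(\<lambda>n. \<Sum>k=1..n. a k * (d k * Fourier_coeff \<phi> f k * ln (real k))) \<in> O(\<lambda>_. 1)"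
      by (intro bounded_pairings_Fourier_coeff[OF assms(1,4) L]) auto
  qed
  then show ?thesis
    by (simp add: power_mult_distrib)
qed

end
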